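(* Let $\kappa>-1$ and $\lambda\in\mathbb{C}$. Let $T_\kappa$ be the operator $T_\kappa f(x)=f'(x)+\kappa\frac{f(x)-f(0)}{x}$ on functions of one real variable. Then the problem $$T_\kappa f(x)=i\lambda f(x),\qquad f(0)=1,$$ has a unique analytic solution, namely $f(x)=M_\kappa(i\lambda x):=M(1,\kappa+1;i\lambda x)$, where $M(a,b;z)=\sum_{n=0}^\infty\frac{(a)_n}{(b)_n}\frac{z^n}{n!}$ is the confluent hypergeometric (Kummer) function.
   Context: $(a)_n=\Gamma(a+n)/\Gamma(a)$ is the Pochhammer symbol. For an analytic $f$, the quotient $(f(x)-f(0))/x$ is understood as its analytic extension at $x=0$. *)

theory Defs
  imports "HOL-Analysis.Analysis"
begin

definition real_analytic_on :: "(real \<Rightarrow> complex) \<Rightarrow> real set \<Rightarrow> bool" where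
  "real_analytic_on f S \<longleftrightarrow>
     (\<forall>x0\<in>S. \<exists>r>0. \<exists>c::nat \<Rightarrow> complex.
        \<forall>y. \<bar>y - x0\<bar> < r \<longrightarrow> (\<lambda>n. c n * complex_of_real (y - x0) ^ n) sums f y)"

text \<open>Dunkl-type operator T_kappa f(x) = f'(x) + kappa (f(x) - f(0))/x; at x = 0 the
  quotient is its (analytic) extension, i.e. f'(0).\<close>
definition T_kappa :: "real \<Rightarrow> (real \<Rightarrow> complex) \<Rightarrow> real \<Rightarrow> complex" where
  "T_kappa \<kappa> f x =
     vector_derivative f (at x) +
     complex_of_real \<kappa> * (if x = 0 then vector_derivative f (at 0)
                            else (f x - f 0) / complex_of_real x)"

definition kummer_M :: "complex \<Rightarrow> complex \<Rightarrow> complex \<Rightarrow> complex" where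
  "kummer_M a b z = (\<Sum>n. pochhammer a n / pochhammer b n * z ^ n / fact n)"

end

theory Submission
  imports Defs "HOL-Complex_Analysis.Complex_Analysis"
begin

text \<open>
  The series K(z) = \<Sum> z^n / (\<kappa>+1)_n is entire, and the recursion (\<kappa>+1+n) a_(n+1) = a_n of
  its coefficients is the identity z K'(z) + \<kappa> (K(z) - 1) = z K(z); dividing by x shows that
  M(x) = K(i\<lambda>x) is an eigenfunction of T_\<kappa>.
  The difference g of two analytic solutions vanishes at 0 and satisfies g' = i\<lambda> g - \<kappa> g / x
  off 0. On each half-line |x|^\<kappa> exp(-i\<lambda>x) g(x) is therefore constant; near 0 it equals
  (g(x)/x) |x|^(\<kappa>+1) exp(-i\<lambda>x), which tends to g'(0) \<cdot> 0 because \<kappa> > -1, so g = 0.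
\<close>

lemma of_real_pos_notin_nonpos_Ints:
  "x > 0 \<Longrightarrow> (of_real x :: 'a :: real_algebra_1) \<notin> \<int>\<^sub>\<le>\<^sub>0"
  by (auto simp: of_real_in_nonpos_Ints_iff)

lemma kummer_M_1_eq_powser: "kummer_M 1 b = (\<lambda>z. \<Sum>n. 1 / pochhammer b n * z ^ n)"
  by (simp add: kummer_M_def pochhammer_fact[symmetric] fun_eq_iff)

lemma summable_kummer_M_1:
  fixes b z :: complex
  assumes "b \<notin> \<int>\<^sub>\<le>\<^sub>0"
  shows "summable (\<lambda>n. 1 / pochhammer b n * z ^ n)"
proof (rule summable_ratio_test[of "1/2" "nat \<lceil>2 * norm z + norm b\<rceil>"])
  fix n assume n: "n \<ge> nat \<lceil>2 * norm z + norm b\<rceil>"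
  have "b + of_nat n \<noteq> 0"
    using assms plus_of_nat_eq_0_imp by blast
  then have pos: "norm (b + of_nat n) > 0" by simp
  have "2 * norm z \<le> norm (of_nat n :: complex) - norm b"
    using n by simp
  also have "\<dots> \<le> norm (b + of_nat n)"
    using norm_diff_ineq[of "of_nat n" b] by (simp add: add.commute)
  finally have ratio: "norm z / norm (b + of_nat n) \<le> 1/2"
    using pos by (simp add: field_simps)
  have "norm (1 / pochhammer b (Suc n) * z ^ Suc n)
        = norm (1 / pochhammer b n * z ^ n) * (norm z / norm (b + of_nat n))"
    by (simp add: pochhammer_Suc norm_mult norm_divide)
  also have "\<dots> \<le> norm (1 / pochhammer b n * z ^ n) * (1/2)"
    using ratio by (intro mult_left_mono) auto
  finally show "norm (1 / pochhammer b (Suc n) * z ^ Suc n) \<le> 1/2 * norm (1 / pochhammer b n * z ^ n)"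
    by simp
qed simp

lemma has_field_derivative_kummer_M_1:
  assumes "b \<notin> \<int>\<^sub>\<le>\<^sub>0"
  shows "(kummer_M 1 b has_field_derivative (\<Sum>n. diffs (\<lambda>n. 1 / pochhammer b n) n * z ^ n)) (at z)"
  unfolding kummer_M_1_eq_powser
  by (rule termdiffs_strong_converges_everywhere) (rule summable_kummer_M_1[OF assms])

lemma holomorphic_kummer_M_1:
  assumes "b \<notin> \<int>\<^sub>\<le>\<^sub>0"
  shows "kummer_M 1 b holomorphic_on UNIV"
  using has_field_derivative_kummer_M_1[OF assms] by (auto simp: holomorphic_on_open)

lemma kummer_M_1_0 [simp]: "kummer_M 1 b 0 = 1"
  unfolding kummer_M_1_eq_powser powser_zero by simp

lemma deriv_kummer_M_1_0:
  assumes "b \<notin> \<int>\<^sub>\<le>\<^sub>0"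
  shows "deriv (kummer_M 1 b) 0 = 1 / b"
  using DERIV_imp_deriv[OF has_field_derivative_kummer_M_1[OF assms, of 0]]
  unfolding powser_zero by (simp add: diffs_def)

lemma kummer_M_1_ode:
  assumes "b \<notin> \<int>\<^sub>\<le>\<^sub>0"
  shows "z * deriv (kummer_M 1 b) z + (b - 1) * (kummer_M 1 b z - 1) = z * kummer_M 1 b z"
proof -
  define a where "a n = 1 / pochhammer b n" for n
  have K: "kummer_M 1 b z = (\<Sum>n. a n * z ^ n)"
    by (simp add: kummer_M_1_eq_powser a_def)
  have summ: "summable (\<lambda>n. a n * w ^ n)" for w
    unfolding a_def by (rule summable_kummer_M_1[OF assms])
  have "deriv (kummer_M 1 b) z = (\<Sum>n. diffs a n * z ^ n)"
    unfolding a_def by (rule DERIV_imp_deriv[OF has_field_derivative_kummer_M_1[OF assms]])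
  then have "(\<lambda>n. z * (diffs a n * z ^ n)) sums (z * deriv (kummer_M 1 b) z)"
    using summ by (simp add: sums_mult summable_sums termdiff_converges_all)
  moreover have "(\<lambda>n. (b - 1) * (a (Suc n) * z ^ Suc n)) sums ((b - 1) * (kummer_M 1 b z - 1))"
    using summable_sums[OF summ] unfolding K
    by (intro sums_mult, subst sums_Suc_iff) (simp add: a_def)
  ultimately have "(\<lambda>n. z * (diffs a n * z ^ n) + (b - 1) * (a (Suc n) * z ^ Suc n))
      sums (z * deriv (kummer_M 1 b) z + (b - 1) * (kummer_M 1 b z - 1))"
    by (rule sums_add)
  moreover have "z * (diffs a n * z ^ n) + (b - 1) * (a (Suc n) * z ^ Suc n) = z * (a n * z ^ n)" for n
  proof -
    have "(b + of_nat n) * a (Suc n) = a n"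
      using assms plus_of_nat_eq_0_imp by (auto simp: a_def pochhammer_Suc)
    then show ?thesis
      by (simp add: diffs_def algebra_simps flip: \<open>_ = a n\<close>)
  qed
  ultimately have "(\<lambda>n. z * (a n * z ^ n)) sums (z * deriv (kummer_M 1 b) z + (b - 1) * (kummer_M 1 b z - 1))"
    by simp
  moreover have "(\<lambda>n. z * (a n * z ^ n)) sums (z * kummer_M 1 b z)"
    unfolding K by (intro sums_mult summable_sums summ)
  ultimately show ?thesis
    using sums_unique2 by blast
qed

lemma has_vector_derivative_scaled_complex:
  assumes "(g has_field_derivative D) (at (c * of_real x))"
  shows "((\<lambda>x. g (c * of_real x)) has_vector_derivative c * D) (at x)"
proof -
  have "((\<lambda>w. c * w) has_field_derivative c) (at (of_real x))"
    by (auto intro!: derivative_eq_intros)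
  from DERIV_chain'[OF this assms]
  have "((\<lambda>w. g (c * w)) has_field_derivative c * D) (at (of_real x))"
    by (simp add: mult.commute)
  then show ?thesis
    by (rule has_vector_derivative_real_field)
qed

lemma real_analytic_on_holomorphic_scaled:
  assumes "g holomorphic_on UNIV"
  shows "real_analytic_on (\<lambda>x. g (c * of_real x)) S"
  unfolding real_analytic_on_def
proof (intro ballI exI conjI allI impI)
  fix x0 y :: real
  have "c * of_real y \<in> ball (c * of_real x0) (norm (c * of_real (y - x0)) + 1)"
    by (simp add: dist_norm norm_minus_commute algebra_simps)
  from holomorphic_power_series[OF holomorphic_on_subset[OF assms] this]
  have "(\<lambda>n. (deriv ^^ n) g (c * of_real x0) / fact n * (c * of_real y - c * of_real x0) ^ n) sums g (c * of_real y)"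
    by simp
  then show "(\<lambda>n. ((deriv ^^ n) g (c * of_real x0) / fact n * c ^ n) * of_real (y - x0) ^ n) sums g (c * of_real y)"
    by (simp add: power_mult_distrib mult_ac flip: right_diff_distrib)
qed (rule zero_less_one)

lemma real_analytic_on_imp_differentiable:
  assumes "real_analytic_on f S" and "x \<in> S"
  shows "f differentiable at x"
proof -
  obtain r c where "r > 0" and f: "\<And>y. \<bar>y - x\<bar> < r \<Longrightarrow> (\<lambda>n. c n * of_real (y - x) ^ n) sums f y"
    using assms unfolding real_analytic_on_def by blast
  define P where "P w = (\<Sum>n. c n * w ^ n)" for w :: complex
  have "summable (\<lambda>n. c n * w ^ n)" if "norm w < r" for w
  proof (rule powser_inside)
    define t where "t = (norm w + r) / 2"
    have "0 < t" "t < r" "norm w < t"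
      using that \<open>r > 0\<close> unfolding t_def by (auto intro: add_nonneg_pos)
    then show "summable (\<lambda>n. c n * of_real t ^ n)" "norm w < norm (complex_of_real t)"
      using f[of "x + t"] by (auto simp: sums_iff)
  qed
  then obtain D where D: "(P has_field_derivative D) (at 0)"
    using termdiffs_strong'[of r c 0] \<open>r > 0\<close> unfolding P_def by auto
  have "((\<lambda>w. w - of_real x) has_field_derivative 1) (at (of_real x))"
    by (auto intro!: derivative_eq_intros)
  from DERIV_chain'[OF this] D
  have "((\<lambda>y. P (of_real y - of_real x)) has_vector_derivative D) (at x)"
    by (intro has_vector_derivative_real_field) simp
  then have "(f has_vector_derivative D) (at x)"
  proof (rule has_vector_derivative_transform_within_open[of _ _ _ "ball x r"])
    show "P (of_real y - of_real x) = f y" if "y \<in> ball x r" for y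
      using f[of y] that by (simp add: P_def sums_iff dist_real_def abs_minus_commute)
  qed (use \<open>r > 0\<close> in auto)
  then show ?thesis
    by (rule differentiableI_vector)
qed

lemma T_kappa_at_nonzero:
  assumes "(f has_vector_derivative D) (at x)" and "x \<noteq> 0"
  shows "T_kappa \<kappa> f x = D + of_real \<kappa> * (f x - f 0) / of_real x"
  using assms by (simp add: T_kappa_def vector_derivative_at)

lemma T_kappa_at_zero:
  assumes "(f has_vector_derivative D) (at 0)"
  shows "T_kappa \<kappa> f 0 = (1 + of_real \<kappa>) * D"
  using assms by (simp add: T_kappa_def vector_derivative_at algebra_simps)

lemma T_kappa_diff:
  assumes "f differentiable at x" "f differentiable at 0" "g differentiable at x" "g differentiable at 0"
  shows "T_kappa \<kappa> (\<lambda>x. f x - g x) x = T_kappa \<kappa> f x - T_kappa \<kappa> g x"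
  using assms by (simp add: T_kappa_def diff_divide_distrib right_diff_distrib)

lemma T_kappa_kummer_M_1:
  fixes \<kappa> :: real and c :: complex
  assumes "\<kappa> > -1"
  defines "M \<equiv> \<lambda>x. kummer_M 1 (of_real (\<kappa> + 1)) (c * of_real x)"
  shows "T_kappa \<kappa> M x = c * M x"
proof -
  define b where "b = complex_of_real (\<kappa> + 1)"
  define K where "K = kummer_M 1 b"
  have b: "b \<notin> \<int>\<^sub>\<le>\<^sub>0"
    unfolding b_def by (rule of_real_pos_notin_nonpos_Ints) (use assms(1) in simp)
  have M: "M = (\<lambda>x. K (c * of_real x))"
    by (simp add: M_def K_def b_def)
  have "(K has_field_derivative deriv K w) (at w)" for w
    unfolding K_def by (metis DERIV_imp_deriv has_field_derivative_kummer_M_1[OF b])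
  then have M': "(M has_vector_derivative c * deriv K (c * of_real y)) (at y)" for y
    unfolding M by (rule has_vector_derivative_scaled_complex)
  show ?thesis
  proof (cases "x = 0")
    case True
    have "b \<noteq> 0" using b by auto
    then show ?thesis
      using T_kappa_at_zero[OF M'] True
      by (simp add: M K_def deriv_kummer_M_1_0[OF b]) (simp add: b_def field_simps)
  next
    case False
    have "T_kappa \<kappa> M x = c * deriv K (c * of_real x) + of_real \<kappa> * (K (c * of_real x) - 1) / of_real x"
      using T_kappa_at_nonzero[OF M' False] by (simp add: M K_def)
    also have "\<dots> = (c * of_real x * deriv K (c * of_real x) + (b - 1) * (K (c * of_real x) - 1)) / of_real x"
      using False by (simp add: b_def field_simps)
    also have "\<dots> = c * M x"
      using False by (simp add: kummer_M_1_ode[OF b] K_def M)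
    finally show ?thesis .
  qed
qed

lemma tendsto_quotient_at_right_0:
  fixes g :: "real \<Rightarrow> 'a :: real_normed_field"
  assumes "(g has_vector_derivative d) (at 0)" and "g 0 = 0"
  shows "((\<lambda>y. g y / of_real y) \<longlongrightarrow> d) (at_right 0)"
proof -
  have "(g has_vector_derivative d) (at 0 within {0<..})"
    using assms(1) by (rule has_vector_derivative_at_within)
  then have "((\<lambda>y. (1 / norm y) *\<^sub>R (g y - y *\<^sub>R d)) \<longlongrightarrow> 0) (at_right 0)"
    unfolding has_vector_derivative_def has_derivative_within using assms(2) by simp
  moreover have "\<forall>\<^sub>F y in at_right 0. (1 / norm y) *\<^sub>R (g y - y *\<^sub>R d) = g y / of_real y - d"
    by (rule eventually_at_rightI[of 0 1]) (auto simp: scaleR_conv_of_real field_simps)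
  ultimately have "((\<lambda>y. g y / of_real y - d) \<longlongrightarrow> 0) (at_right 0)"
    using Lim_transform_eventually by fastforce
  then show ?thesis
    using Lim_null by blast
qed

lemma singular_ode_vanishes_at_right:
  fixes g :: "real \<Rightarrow> complex" and \<kappa> :: real
  assumes "\<kappa> > -1" and "g 0 = 0" and "(g has_vector_derivative d) (at 0)"
    and ode: "\<And>x. x > 0 \<Longrightarrow> (g has_vector_derivative (\<mu> * g x - of_real \<kappa> * g x / of_real x)) (at x)"
    and "x > 0"
  shows "g x = 0"
proof -
  define h where "h y = g y * of_real (y powr \<kappa>) * exp (- \<mu> * of_real y)" for y
  have "(h has_vector_derivative 0) (at y within {0<..})" if "y > 0" for y
  proof -
    have "((\<lambda>y. of_real (y powr \<kappa>) :: complex) has_vector_derivative of_real (\<kappa> * y powr (\<kappa> - 1))) (at y)"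
      using that by (intro has_vector_derivative_of_real has_real_derivative_powr)
    moreover have "((\<lambda>y. exp (- \<mu> * of_real y)) has_vector_derivative exp (- \<mu> * of_real y) * (- \<mu>)) (at y)"
      by (rule has_vector_derivative_real_field) (auto intro!: derivative_eq_intros)
    ultimately have "(h has_vector_derivative
        g y * of_real (y powr \<kappa>) * (exp (- \<mu> * of_real y) * (- \<mu>)) +
        (g y * of_real (\<kappa> * y powr (\<kappa> - 1)) + (\<mu> * g y - of_real \<kappa> * g y / of_real y) * of_real (y powr \<kappa>))
          * exp (- \<mu> * of_real y)) (at y)"
      unfolding h_def using ode[OF that] by (intro has_vector_derivative_mult)
    moreover have "y powr (\<kappa> - 1) = y powr \<kappa> / y"
      using that by (simp add: powr_diff)
    ultimately have "(h has_vector_derivative 0) (at y)"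
      using that by (simp add: field_simps)
    then show ?thesis
      by (rule has_vector_derivative_at_within)
  qed
  then obtain C where C: "\<And>y. y > 0 \<Longrightarrow> h y = C"
    using has_vector_derivative_zero_constant[of "{0<..}" h] by auto
  have "((\<lambda>y. g y / of_real y * of_real (y powr (\<kappa> + 1)) * exp (- \<mu> * of_real y))
          \<longlongrightarrow> d * of_real 0 * exp (- \<mu> * of_real 0)) (at_right 0)"
  proof (intro tendsto_intros tendsto_quotient_at_right_0 assms(2,3))
    show "((\<lambda>y. y powr (\<kappa> + 1)) \<longlongrightarrow> 0) (at_right 0)"
      using assms(1) by (intro tendsto_zero_powrI) (auto intro: eventually_at_rightI[of 0 1])
  qed
  moreover have "\<forall>\<^sub>F y in at_right 0. g y / of_real y * of_real (y powr (\<kappa> + 1)) * exp (- \<mu> * of_real y) = C"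
  proof (rule eventually_at_rightI[of 0 1])
    fix y :: real assume "y \<in> {0<..<1}"
    then show "g y / of_real y * of_real (y powr (\<kappa> + 1)) * exp (- \<mu> * of_real y) = C"
      using C[of y] by (simp add: h_def powr_add field_simps)
  qed simp
  ultimately have "C = 0"
    using tendsto_unique[OF _ tendsto_eventually] by force
  then show ?thesis
    using C[of x] \<open>x > 0\<close> by (simp add: h_def)
qed

lemma T_kappa_eigenfunction_vanishes:
  fixes g :: "real \<Rightarrow> complex"
  assumes "\<kappa> > -1" and diff: "\<And>x. g differentiable at x" and "g 0 = 0"
    and eigen: "\<And>x. T_kappa \<kappa> g x = \<mu> * g x"
  shows "g x = 0"
proof -
  have g': "(g has_vector_derivative vector_derivative g (at x)) (at x)" for x
    using diff vector_derivative_works by blast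
  have ode: "vector_derivative g (at x) = \<mu> * g x - of_real \<kappa> * g x / of_real x" if "x \<noteq> 0" for x
    using T_kappa_at_nonzero[OF g' that, of \<kappa>] eigen[of x] \<open>g 0 = 0\<close> by (simp add: eq_diff_eq)
  have right: "g y = 0" if "y > 0" for y
  proof (rule singular_ode_vanishes_at_right[OF assms(1) \<open>g 0 = 0\<close> g'[of 0] _ that])
    show "(g has_vector_derivative (\<mu> * g x - of_real \<kappa> * g x / of_real x)) (at x)" if "x > 0" for x
      using g'[of x] ode[of x] that by simp
  qed
  define h where "h y = g (- y)" for y
  have h': "(h has_vector_derivative - vector_derivative g (at (- y))) (at y)" for y
  proof -
    have "((\<lambda>y::real. - y) has_vector_derivative - 1) (at y)"
      by (auto intro!: derivative_eq_intros)
    from vector_diff_chain_at[OF this g'] show ?thesis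
      by (simp add: h_def[abs_def] o_def)
  qed
  have left: "h y = 0" if "y > 0" for y
  proof (rule singular_ode_vanishes_at_right[OF assms(1) _ h'[of 0] _ that, of "- \<mu>"])
    show "h 0 = 0" using \<open>g 0 = 0\<close> by (simp add: h_def)
    show "(h has_vector_derivative (- \<mu> * h x - of_real \<kappa> * h x / of_real x)) (at x)" if "x > 0" for x
      using h'[of x] ode[of "- x"] that by (simp add: h_def algebra_simps)
  qed
  show ?thesis
    using right[of x] left[of "- x"] \<open>g 0 = 0\<close> by (cases x "0::real" rule: linorder_cases) (auto simp: h_def)
qed

lemma T_kappa_eigenfunction_unique:
  fixes f g :: "real \<Rightarrow> complex"
  assumes "\<kappa> > -1" and "\<And>x. f differentiable at x" and "\<And>x. g differentiable at x"
    and "f 0 = g 0" and "\<And>x. T_kappa \<kappa> f x = \<mu> * f x" and "\<And>x. T_kappa \<kappa> g x = \<mu> * g x"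
  shows "f = g"
proof
  fix x
  have "f x - g x = 0"
  proof (rule T_kappa_eigenfunction_vanishes[OF assms(1), where g = "\<lambda>x. f x - g x" and \<mu> = \<mu>])
    show "(\<lambda>x. f x - g x) differentiable at x" for x
      using assms(2,3) by (rule differentiable_diff)
    show "T_kappa \<kappa> (\<lambda>x. f x - g x) x = \<mu> * (f x - g x)" for x
      using assms by (simp add: T_kappa_diff right_diff_distrib)
  qed (use assms(4) in simp)
  then show "f x = g x" by simp
qed

theorem theorem5p1:
  fixes \<kappa> :: real and lam :: complex
  assumes "\<kappa> > -1"
  defines "M \<equiv> (\<lambda>x::real. kummer_M 1 (complex_of_real (\<kappa> + 1)) (\<i> * lam * complex_of_real x))"
  shows "real_analytic_on M UNIV \<and> M 0 = 1 \<and> (\<forall>x. T_kappa \<kappa> M x = \<i> * lam * M x) \<and>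
         (\<forall>f. real_analytic_on f UNIV \<and> f 0 = 1 \<and> (\<forall>x. T_kappa \<kappa> f x = \<i> * lam * f x)
              \<longrightarrow> f = M)"
proof (intro conjI allI impI)
  have "complex_of_real (\<kappa> + 1) \<notin> \<int>\<^sub>\<le>\<^sub>0"
    using assms(1) by (intro of_real_pos_notin_nonpos_Ints) simp
  then show analytic: "real_analytic_on M UNIV"
    unfolding M_def by (intro real_analytic_on_holomorphic_scaled holomorphic_kummer_M_1)
  show M0: "M 0 = 1"
    by (simp add: M_def)
  show eigen: "T_kappa \<kappa> M x = \<i> * lam * M x" for x
    unfolding M_def by (rule T_kappa_kummer_M_1[OF assms(1)])
  show "f = M" if "real_analytic_on f UNIV \<and> f 0 = 1 \<and> (\<forall>x. T_kappa \<kappa> f x = \<i> * lam * f x)" for f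
    using that M0 eigen analytic real_analytic_on_imp_differentiable
    by (intro T_kappa_eigenfunction_unique[OF assms(1)]) auto
qed

end
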